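(* Let $\pi$ be uniform on $\mathrm{PF}_n$ and $f$ uniform on $\widetilde{\mathcal F}_n$. Then the species $\mu(\pi)$ and $\mu(f)$ have the same distribution. Consequently the number of inversions $\#\{(i,j):i<j,\ g(i)>g(j)\}$ has the same distribution for $g=\pi$ and $g=f$.
   Context: A parking function of length $n$ is a sequence $(\pi_1,\dots,\pi_n)$ with $1\le\pi_i\le n$ such that $\#\{t:\pi_t\le i\}\ge i$ for all $1\le i\le n$; $\mathrm{PF}_n$ denotes the set of these. $\widetilde{\mathcal F}_n$ is the set of all functions $g:[n]\to[n+1]$. For $g\in\widetilde{\mathcal F}_n$ and $0\le i\le n$, let $\mu_i(g)$ be the number of values $v\in[n+1]$ with $\#\{t:g(t)=v\}=i$; the species of $g$ is $\mu(g)=(\mu_0(g),\mu_1(g),\dots,\mu_n(g))$. *)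

theory Defs
  imports "HOL-Probability.Probability"
begin

definition PF :: "nat \<Rightarrow> (nat \<Rightarrow> nat) set" where
  "PF n = {p \<in> {1..n} \<rightarrow>\<^sub>E {1..n}. \<forall>i\<in>{1..n}. card {t\<in>{1..n}. p t \<le> i} \<ge> i}"

definition Ftilde :: "nat \<Rightarrow> (nat \<Rightarrow> nat) set" where
  "Ftilde n = {1..n} \<rightarrow>\<^sub>E {1..n+1}"

definition mu :: "nat \<Rightarrow> (nat \<Rightarrow> nat) \<Rightarrow> nat \<Rightarrow> nat" where
  "mu n g i = card {v\<in>{1..n+1}. card {t\<in>{1..n}. g t = v} = i}"

definition species :: "nat \<Rightarrow> (nat \<Rightarrow> nat) \<Rightarrow> nat list" where
  "species n g = map (mu n g) [0..<n+1]"

definition inversions :: "nat \<Rightarrow> (nat \<Rightarrow> nat) \<Rightarrow> nat" where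
  "inversions n g = card {(i,j). i\<in>{1..n} \<and> j\<in>{1..n} \<and> i < j \<and> g i > g j}"

end

theory Submission
  imports Defs
begin

text \<open>Both statements follow from one counting identity: for every property of the pair
  (species, number of inversions), the functions in \<open>Ftilde n\<close> with that property are exactly
  \<open>n + 1\<close> times as many as the parking functions with it. Group the functions by their content,
  the multiplicity of each value. Both the species and being a parking function depend only on the
  content, and by the cycle lemma exactly one of the \<open>n + 1\<close> cyclic rotations of a content is the
  content of a parking function. It remains to see that rotating the content does not change the
  distribution of inversions among the functions with that content. A rotation is a product of
  adjacent transpositions \<open>(v v+1)\<close>, and each of them is realised by an inversion-preserving
  involution: reverse the subword of letters \<open>v\<close>, \<open>v + 1\<close> and exchange the two letters.\<close>

section \<open>Order-reversing involution of a finite set\<close>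

definition rank_in :: "'a::linorder set \<Rightarrow> 'a \<Rightarrow> nat" where
  "rank_in P = the_inv_into {..<card P} ((!) (sorted_list_of_set P))"

definition reflect :: "'a::linorder set \<Rightarrow> 'a \<Rightarrow> 'a" where
  "reflect P t = sorted_list_of_set P ! (card P - 1 - rank_in P t)"

lemma bij_betw_nth_sorted_list_of_set:
  "finite P \<Longrightarrow> bij_betw ((!) (sorted_list_of_set P)) {..<card P} P"
  by (intro bij_betw_nth) auto

lemma
  assumes "finite P" "t \<in> P"
  shows rank_in_less: "rank_in P t < card P"
    and nth_rank_in: "sorted_list_of_set P ! rank_in P t = t"
  using bij_betw_apply[OF bij_betw_the_inv_into] f_the_inv_into_f_bij_betw
    bij_betw_nth_sorted_list_of_set[OF assms(1)] assms(2)
  unfolding rank_in_def by fastforce+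

lemma rank_in_nth: "finite P \<Longrightarrow> i < card P \<Longrightarrow> rank_in P (sorted_list_of_set P ! i) = i"
  unfolding rank_in_def
  by (metis bij_betw_def bij_betw_nth_sorted_list_of_set lessThan_iff the_inv_into_f_f)

lemma
  assumes "finite P" "t \<in> P"
  shows reflect_in: "reflect P t \<in> P"
    and reflect_reflect: "reflect P (reflect P t) = t"
proof -
  have i: "rank_in P t < card P" using rank_in_less[OF assms] .
  then have "card P - 1 - rank_in P t \<in> {..<card P}" by auto
  then show "reflect P t \<in> P"
    unfolding reflect_def using bij_betw_apply[OF bij_betw_nth_sorted_list_of_set[OF assms(1)]] by blast
  have "rank_in P (reflect P t) = card P - 1 - rank_in P t"
    unfolding reflect_def using i assms(1) by (intro rank_in_nth) auto
  then show "reflect P (reflect P t) = t"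
    unfolding reflect_def using i nth_rank_in[OF assms] by (simp add: Suc_leI diff_diff_cancel)
qed

lemma inj_on_reflect: "finite P \<Longrightarrow> inj_on (reflect P) P"
  by (metis inj_onI reflect_reflect)

lemma reflect_less:
  assumes "finite P" "s \<in> P" "t \<in> P" "s < t"
  shows "reflect P t < reflect P s"
proof -
  have sorted: "sorted_wrt (<) (sorted_list_of_set P)" by simp
  have "rank_in P s < rank_in P t"
    using assms sorted rank_in_less nth_rank_in
    by (metis length_sorted_list_of_set linorder_neqE_nat order.asym sorted_wrt_nth_less)
  then show ?thesis
    using rank_in_less[OF assms(1,2)] rank_in_less[OF assms(1,3)] sorted assms(1)
    unfolding reflect_def by (simp add: sorted_wrt_nth_less)
qed

section \<open>Exchanging two adjacent letters\<close>

definition word_content :: "nat \<Rightarrow> (nat \<Rightarrow> nat) \<Rightarrow> nat \<Rightarrow> nat" where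
  "word_content n g v = card {t\<in>{1..n}. g t = v}"

definition letter_positions :: "nat \<Rightarrow> nat \<Rightarrow> (nat \<Rightarrow> nat) \<Rightarrow> nat set" where
  "letter_positions n v g = {t\<in>{1..n}. g t = v \<or> g t = Suc v}"

text \<open>Pairs of positions inside the reversed subword keep their inversion status, and all other
  letters stay where they are.\<close>
definition letter_swap :: "nat \<Rightarrow> nat \<Rightarrow> (nat \<Rightarrow> nat) \<Rightarrow> nat \<Rightarrow> nat" where
  "letter_swap n v g t =
     (let P = letter_positions n v g
      in if t \<in> P then Transposition.transpose v (Suc v) (g (reflect P t)) else g t)"

definition inversion_pairs :: "nat \<Rightarrow> (nat \<Rightarrow> nat) \<Rightarrow> (nat \<times> nat) set" where
  "inversion_pairs n g = {(i,j). i\<in>{1..n} \<and> j\<in>{1..n} \<and> i < j \<and> g i > g j}"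

lemma finite_letter_positions [simp]: "finite (letter_positions n v g)"
  unfolding letter_positions_def by simp

lemma letter_swap_in:
  assumes "t \<in> letter_positions n v g"
  shows "letter_swap n v g t = Transposition.transpose v (Suc v) (g (reflect (letter_positions n v g) t))"
    and "letter_swap n v g t = v \<or> letter_swap n v g t = Suc v"
proof -
  let ?P = "letter_positions n v g"
  show *: "letter_swap n v g t = Transposition.transpose v (Suc v) (g (reflect ?P t))"
    using assms unfolding letter_swap_def by simp
  have "reflect ?P t \<in> ?P" using reflect_in[OF finite_letter_positions assms] .
  then show "letter_swap n v g t = v \<or> letter_swap n v g t = Suc v"
    unfolding * by (auto simp: letter_positions_def transpose_def)
qed

lemma letter_swap_out: "t \<notin> letter_positions n v g \<Longrightarrow> letter_swap n v g t = g t"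
  unfolding letter_swap_def by simp

lemma letter_positions_letter_swap:
  "letter_positions n v (letter_swap n v g) = letter_positions n v g"
proof (rule set_eqI)
  fix t
  show "t \<in> letter_positions n v (letter_swap n v g) \<longleftrightarrow> t \<in> letter_positions n v g"
    using letter_swap_in(2)[of t n v g] letter_swap_out[of t n v g]
    by (cases "t \<in> letter_positions n v g") (auto simp: letter_positions_def)
qed

lemma letter_swap_letter_swap: "letter_swap n v (letter_swap n v g) = g"
proof
  fix t
  let ?P = "letter_positions n v g"
  show "letter_swap n v (letter_swap n v g) t = g t"
  proof (cases "t \<in> ?P")
    case True
    have "reflect ?P t \<in> ?P" using reflect_in[OF finite_letter_positions True] .
    then show ?thesis
      using True letter_swap_in(1) reflect_reflect[OF finite_letter_positions True]
      by (simp add: letter_positions_letter_swap)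
  next
    case False
    then show ?thesis by (simp add: letter_swap_out letter_positions_letter_swap)
  qed
qed

lemma letter_swap_Ftilde:
  assumes "g \<in> Ftilde n" "1 \<le> v" "v \<le> n"
  shows "letter_swap n v g \<in> Ftilde n"
proof -
  have "letter_swap n v g t \<in> {1..n+1}" if "t \<in> {1..n}" for t
    using assms that letter_swap_in(2)[of t n v g] letter_swap_out[of t n v g]
    by (cases "t \<in> letter_positions n v g") (auto simp: Ftilde_def)
  moreover have "letter_swap n v g t = undefined" if "t \<notin> {1..n}" for t
    using assms that letter_swap_out[of t n v g]
    by (auto simp: Ftilde_def letter_positions_def PiE_iff extensional_def)
  ultimately show ?thesis by (auto simp: Ftilde_def PiE_iff extensional_def)
qed

lemma word_content_letter_swap:
  "word_content n (letter_swap n v g) = word_content n g \<circ> Transposition.transpose v (Suc v)"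
proof
  fix u
  let ?P = "letter_positions n v g" and ?\<tau> = "Transposition.transpose v (Suc v)"
  show "word_content n (letter_swap n v g) u = (word_content n g \<circ> ?\<tau>) u"
  proof (cases "u = v \<or> u = Suc v")
    case True
    have "{t\<in>{1..n}. letter_swap n v g t = u} = reflect ?P ` {t\<in>{1..n}. g t = ?\<tau> u}"
    proof (rule set_eqI, rule iffI)
      fix t assume "t \<in> {t\<in>{1..n}. letter_swap n v g t = u}"
      then have t: "t \<in> {1..n}" "letter_swap n v g t = u" by auto
      have tP: "t \<in> ?P"
      proof (rule ccontr)
        assume "t \<notin> ?P"
        then show False
          using t True letter_swap_out[of t n v g] by (simp add: letter_positions_def)
      qed
      have "reflect ?P t \<in> ?P" using reflect_in[OF finite_letter_positions tP] .
      then have "reflect ?P t \<in> {t\<in>{1..n}. g t = ?\<tau> u}"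
        using t letter_swap_in(1)[OF tP] by (auto simp: letter_positions_def transpose_eq_iff)
      then show "t \<in> reflect ?P ` {t\<in>{1..n}. g t = ?\<tau> u}"
        using reflect_reflect[OF finite_letter_positions tP] by force
    next
      fix t assume "t \<in> reflect ?P ` {t\<in>{1..n}. g t = ?\<tau> u}"
      then obtain s where s: "s \<in> {1..n}" "g s = ?\<tau> u" "t = reflect ?P s" by auto
      with True have sP: "s \<in> ?P" by (auto simp: letter_positions_def transpose_def)
      then have "t \<in> ?P" using reflect_in[OF finite_letter_positions sP] s(3) by simp
      then show "t \<in> {t\<in>{1..n}. letter_swap n v g t = u}"
        using letter_swap_in(1) s reflect_reflect[OF finite_letter_positions sP]
        by (auto simp: letter_positions_def)
    qed
    moreover have "{t\<in>{1..n}. g t = ?\<tau> u} \<subseteq> ?P"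
      using True by (auto simp: letter_positions_def transpose_def)
    then have "inj_on (reflect ?P) {t\<in>{1..n}. g t = ?\<tau> u}"
      by (rule inj_on_subset[OF inj_on_reflect[OF finite_letter_positions]])
    ultimately show ?thesis by (simp add: word_content_def card_image)
  next
    case False
    have "letter_swap n v g t = u \<longleftrightarrow> g t = u" if "t \<in> {1..n}" for t
      using False that letter_swap_in(2)[of t n v g] letter_swap_out[of t n v g]
      by (cases "t \<in> ?P") (auto simp: letter_positions_def)
    then have "{t\<in>{1..n}. letter_swap n v g t = u} = {t\<in>{1..n}. g t = u}" by blast
    then show ?thesis using False by (simp add: word_content_def)
  qed
qed

definition reflect_pair :: "nat set \<Rightarrow> nat \<times> nat \<Rightarrow> nat \<times> nat" where
  "reflect_pair P = (\<lambda>(i,j). if i \<in> P \<and> j \<in> P then (reflect P j, reflect P i) else (i,j))"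

lemma reflect_pair_reflect_pair: "finite P \<Longrightarrow> reflect_pair P (reflect_pair P p) = p"
  by (cases p) (auto simp: reflect_pair_def reflect_in reflect_reflect)

lemma reflect_pair_inversion_pair:
  assumes "p \<in> inversion_pairs n g"
  shows "reflect_pair (letter_positions n v g) p \<in> inversion_pairs n (letter_swap n v g)"
proof -
  let ?P = "letter_positions n v g" and ?h = "letter_swap n v g"
  obtain i j where p: "p = (i,j)" "i \<in> {1..n}" "j \<in> {1..n}" "i < j" "g j < g i"
    using assms by (auto simp: inversion_pairs_def)
  consider "i \<in> ?P" "j \<in> ?P" | "i \<in> ?P" "j \<notin> ?P" | "i \<notin> ?P" "j \<in> ?P" | "i \<notin> ?P" "j \<notin> ?P"
    by blast
  then show ?thesis
  proof cases
    case 1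
    then have g: "g i = Suc v" "g j = v" using p by (auto simp: letter_positions_def)
    have r: "reflect ?P i \<in> ?P" "reflect ?P j \<in> ?P"
      using reflect_in[OF finite_letter_positions] 1 by auto
    have "?h (reflect ?P j) = Suc v" "?h (reflect ?P i) = v"
      using letter_swap_in(1)[OF r(1)] letter_swap_in(1)[OF r(2)] g 1
      by (simp_all add: reflect_reflect)
    moreover have "reflect ?P j < reflect ?P i" using reflect_less[OF _ 1 p(4)] by simp
    ultimately show ?thesis
      using p 1 r by (auto simp: reflect_pair_def inversion_pairs_def letter_positions_def)
  next
    case 2
    then have "g j < v" using p by (auto simp: letter_positions_def)
    moreover have "v \<le> ?h i" using letter_swap_in(2)[OF 2(1)] by auto
    moreover have "?h j = g j" using letter_swap_out[OF 2(2)] .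
    ultimately show ?thesis using p 2 by (auto simp: reflect_pair_def inversion_pairs_def)
  next
    case 3
    then have "Suc v < g i" using p by (auto simp: letter_positions_def)
    moreover have "?h j \<le> Suc v" using letter_swap_in(2)[OF 3(2)] by auto
    moreover have "?h i = g i" using letter_swap_out[OF 3(1)] .
    ultimately show ?thesis using p 3 by (auto simp: reflect_pair_def inversion_pairs_def)
  next
    case 4
    then show ?thesis using p letter_swap_out[of i] letter_swap_out[of j]
      by (auto simp: reflect_pair_def inversion_pairs_def)
  qed
qed

lemma inversions_letter_swap: "inversions n (letter_swap n v g) = inversions n g"
proof -
  let ?\<phi> = "reflect_pair (letter_positions n v g)"
  have "?\<phi> ` inversion_pairs n (letter_swap n v g) \<subseteq> inversion_pairs n g"
    using reflect_pair_inversion_pair[of _ n "letter_swap n v g" v]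
    by (auto simp: letter_positions_letter_swap letter_swap_letter_swap)
  then have "bij_betw ?\<phi> (inversion_pairs n g) (inversion_pairs n (letter_swap n v g))"
    using reflect_pair_inversion_pair reflect_pair_reflect_pair[OF finite_letter_positions]
    by (intro bij_betw_byWitness[where f' = ?\<phi>]) auto
  then show ?thesis
    unfolding inversions_def inversion_pairs_def[symmetric] by (rule bij_betw_same_card[symmetric])
qed

section \<open>Rotating the content\<close>

definition class_count :: "nat \<Rightarrow> (nat \<Rightarrow> bool) \<Rightarrow> (nat \<Rightarrow> nat) \<Rightarrow> nat" where
  "class_count n Q c = card {g\<in>Ftilde n. word_content n g = c \<and> Q (inversions n g)}"

lemma class_count_transpose:
  assumes "1 \<le> v" "v \<le> n"
  shows "class_count n Q (c \<circ> Transposition.transpose v (Suc v)) = class_count n Q c"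
proof -
  let ?\<tau> = "Transposition.transpose v (Suc v)"
  let ?A = "\<lambda>c. {g\<in>Ftilde n. word_content n g = c \<and> Q (inversions n g)}"
  have into: "letter_swap n v ` ?A c \<subseteq> ?A (c \<circ> ?\<tau>)" for c
    using letter_swap_Ftilde[OF _ assms]
    by (auto simp: word_content_letter_swap inversions_letter_swap)
  have "letter_swap n v ` ?A (c \<circ> ?\<tau>) \<subseteq> ?A c"
    using into[of "c \<circ> ?\<tau>"] by (simp add: comp_assoc)
  then have "bij_betw (letter_swap n v) (?A c) (?A (c \<circ> ?\<tau>))"
    using into by (intro bij_betw_byWitness[where f' = "letter_swap n v"])
      (auto simp: letter_swap_letter_swap)
  then show ?thesis
    unfolding class_count_def by (rule bij_betw_same_card[symmetric])
qed

definition cyclic_shift :: "nat \<Rightarrow> nat \<Rightarrow> nat" where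
  "cyclic_shift m w = (if w \<in> {1..m} then w mod m + 1 else w)"

lemma cyclic_shift_Suc:
  assumes "1 \<le> m"
  shows "cyclic_shift (Suc m) = cyclic_shift m \<circ> Transposition.transpose m (Suc m)"
proof
  fix w
  consider "w = 0" | "w = m" | "w = Suc m" | "w \<in> {1..<m}" | "Suc m < w"
    by fastforce
  then show "cyclic_shift (Suc m) w = (cyclic_shift m \<circ> Transposition.transpose m (Suc m)) w"
    using assms by cases (auto simp: cyclic_shift_def)
qed

lemma cyclic_shift_permutes: "cyclic_shift m permutes {1..m}"
proof (induction m)
  case (Suc m)
  show ?case
  proof (cases "m = 0")
    case True
    have "cyclic_shift (Suc 0) = id" by (auto simp: fun_eq_iff cyclic_shift_def)
    then show ?thesis using True permutes_id by metis
  next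
    case False
    have "cyclic_shift m permutes {1..Suc m}"
      using Suc.IH by (rule permutes_subset) auto
    moreover have "Transposition.transpose m (Suc m) permutes {1..Suc m}"
      using False by (intro permutes_swap_id) auto
    ultimately have "cyclic_shift m \<circ> Transposition.transpose m (Suc m) permutes {1..Suc m}"
      by (rule permutes_compose[rotated])
    moreover have "cyclic_shift (Suc m) = cyclic_shift m \<circ> Transposition.transpose m (Suc m)"
      using False by (intro cyclic_shift_Suc) simp
    ultimately show ?thesis by (simp only:)
  qed
qed (simp add: cyclic_shift_def permutes_def)

lemma permutes_funpow: "p permutes S \<Longrightarrow> p ^^ a permutes S"
  by (induction a) (simp_all add: permutes_id permutes_compose)

lemma funpow_cyclic_shift:
  "(cyclic_shift m ^^ a) w = (if w \<in> {1..m} then (w - 1 + a) mod m + 1 else w)"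
proof (induction a)
  case (Suc a)
  show ?case
  proof (cases "w \<in> {1..m}")
    case True
    then have "0 < m" by simp
    have "(cyclic_shift m ^^ Suc a) w = cyclic_shift m ((w - 1 + a) mod m + 1)"
      using Suc.IH True by simp
    also have "\<dots> = (w - 1 + Suc a) mod m + 1"
      using \<open>0 < m\<close> by (simp add: cyclic_shift_def mod_Suc_eq Suc_leI)
    finally show ?thesis using True by simp
  next
    case False
    then have "(cyclic_shift m ^^ a) w = w" by (simp only: Suc.IH if_not_P if_False)
    then have "(cyclic_shift m ^^ Suc a) w = cyclic_shift m w" by simp
    also have "\<dots> = w" using False by (auto simp: cyclic_shift_def)
    finally show ?thesis using False by auto
  qed
qed auto

lemma class_count_cyclic_shift:
  "m \<le> Suc n \<Longrightarrow> class_count n Q (c \<circ> cyclic_shift m) = class_count n Q c"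
proof (induction m)
  case 0
  have "cyclic_shift 0 = id" by (auto simp: fun_eq_iff cyclic_shift_def)
  then show ?case by simp
next
  case (Suc m)
  show ?case
  proof (cases "m = 0")
    case True
    have "cyclic_shift (Suc 0) = id" by (auto simp: fun_eq_iff cyclic_shift_def)
    then show ?thesis using True by simp
  next
    case False
    then have "class_count n Q (c \<circ> cyclic_shift (Suc m))
        = class_count n Q ((c \<circ> cyclic_shift m) \<circ> Transposition.transpose m (Suc m))"
      by (simp add: cyclic_shift_Suc comp_assoc)
    also have "\<dots> = class_count n Q (c \<circ> cyclic_shift m)"
      using False Suc.prems by (intro class_count_transpose) auto
    also have "\<dots> = class_count n Q c"
      by (rule Suc.IH) (use Suc.prems in simp)
    finally show ?thesis .
  qed
qed

lemma class_count_funpow_cyclic_shift: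
  "class_count n Q (c \<circ> (cyclic_shift (Suc n) ^^ a)) = class_count n Q c"
proof (induction a)
  case (Suc a)
  have "class_count n Q (c \<circ> (cyclic_shift (Suc n) ^^ Suc a))
      = class_count n Q ((c \<circ> (cyclic_shift (Suc n) ^^ a)) \<circ> cyclic_shift (Suc n))"
    by (simp only: funpow_Suc_right comp_assoc)
  also have "\<dots> = class_count n Q (c \<circ> (cyclic_shift (Suc n) ^^ a))"
    by (rule class_count_cyclic_shift) simp
  also have "\<dots> = class_count n Q c" by (rule Suc.IH)
  finally show ?case .
qed simp

section \<open>Parking contents and the cycle lemma\<close>

definition parking_content :: "nat \<Rightarrow> (nat \<Rightarrow> nat) \<Rightarrow> bool" where
  "parking_content n c \<longleftrightarrow> (\<forall>i\<in>{1..n}. i \<le> (\<Sum>j<i. c (Suc j)))"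

lemma card_values_le:
  assumes "g \<in> Ftilde n"
  shows "card {t\<in>{1..n}. g t \<le> i} = (\<Sum>j<i. word_content n g (Suc j))"
proof (induction i)
  case 0
  have "1 \<le> g t" if "t \<in> {1..n}" for t
    using assms that by (auto simp: Ftilde_def PiE_iff)
  then have "{t\<in>{1..n}. g t \<le> 0} = {}" by fastforce
  then show ?case by simp
next
  case (Suc i)
  have "{t\<in>{1..n}. g t \<le> Suc i} = {t\<in>{1..n}. g t \<le> i} \<union> {t\<in>{1..n}. g t = Suc i}"
    by auto
  then have "card {t\<in>{1..n}. g t \<le> Suc i}
      = card {t\<in>{1..n}. g t \<le> i} + card {t\<in>{1..n}. g t = Suc i}"
    by (simp add: card_Un_disjoint disjoint_iff)
  then show ?case using Suc by (simp add: word_content_def)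
qed

lemma sum_word_content:
  assumes "g \<in> Ftilde n"
  shows "(\<Sum>j<Suc n. word_content n g (Suc j)) = n"
proof -
  have "{t\<in>{1..n}. g t \<le> Suc n} = {1..n}" using assms by (auto simp: Ftilde_def)
  then show ?thesis using card_values_le[OF assms, of "Suc n"] by simp
qed

lemma PF_eq: "PF n = {g\<in>Ftilde n. parking_content n (word_content n g)}"
proof (rule set_eqI, rule iffI)
  fix g
  assume g: "g \<in> PF n"
  then have F: "g \<in> Ftilde n" by (auto simp: PF_def Ftilde_def PiE_iff)
  have "\<forall>i\<in>{1..n}. i \<le> card {t\<in>{1..n}. g t \<le> i}" using g by (simp add: PF_def)
  then have "parking_content n (word_content n g)"
    unfolding card_values_le[OF F] parking_content_def .
  with F show "g \<in> {g\<in>Ftilde n. parking_content n (word_content n g)}" by simp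
next
  fix g
  assume "g \<in> {g\<in>Ftilde n. parking_content n (word_content n g)}"
  then have g: "g \<in> Ftilde n" and pc: "parking_content n (word_content n g)" by auto
  have le: "\<forall>i\<in>{1..n}. i \<le> card {t\<in>{1..n}. g t \<le> i}"
    using pc unfolding parking_content_def card_values_le[OF g] .
  have "g t \<le> n" if "t \<in> {1..n}" for t
  proof -
    have "card {1..n} \<le> card {t\<in>{1..n}. g t \<le> n}" using le that by auto
    then have "{t\<in>{1..n}. g t \<le> n} = {1..n}"
      by (intro card_seteq) auto
    then show ?thesis using that by blast
  qed
  with g le show "g \<in> PF n"
    by (auto simp: PF_def Ftilde_def PiE_iff)
qed

lemma cycle_lemma:
  fixes H :: "nat \<Rightarrow> int"
  assumes period: "\<And>x. H (x + Suc n) = H x - 1"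
  shows "\<exists>!a. a \<le> n \<and> (\<forall>i\<in>{1..n}. H a \<le> H (a + i))"
proof -
  let ?good = "\<lambda>a. a \<le> n \<and> (\<forall>i\<in>{1..n}. H a \<le> H (a + i))"
  define M where "M = Min (H ` {0..n})"
  have M_le: "M \<le> H x" if "x \<le> n" for x
    unfolding M_def using that by simp
  have "\<exists>x. x \<le> n \<and> H x = M"
    unfolding M_def using Min_in[of "H ` {0..n}"] by fastforce
  define a where "a = (LEAST x. x \<le> n \<and> H x = M)"
  have a: "a \<le> n" "H a = M"
    unfolding a_def using LeastI_ex[OF \<open>\<exists>x. x \<le> n \<and> H x = M\<close>] by auto
  have below_a: "M < H z" if "z < a" for z
    using not_less_Least[OF that[unfolded a_def]] M_le[of z] that a(1) by (auto simp: a_def)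
  have "?good a"
  proof (intro conjI ballI)
    fix i assume i: "i \<in> {1..n}"
    show "H a \<le> H (a + i)"
    proof (cases "a + i \<le> n")
      case False
      then have "H (a + i) = H (a + i - Suc n) - 1" "a + i - Suc n < a"
        using period[of "a + i - Suc n"] i by auto
      then show ?thesis using below_a a(2) by fastforce
    qed (use M_le a in simp)
  qed (rule a(1))
  moreover have False if "?good x" "?good y" "x < y" for x y
  proof -
    have "y - x \<in> {1..n}" "x + Suc n - y \<in> {1..n}" using that by auto
    then have "H x \<le> H (x + (y - x))" "H y \<le> H (y + (x + Suc n - y))"
      using that(1,2) by blast+
    moreover have "x + (y - x) = y" "y + (x + Suc n - y) = x + Suc n" using that by auto
    ultimately show False using period[of x] by simp
  qed
  ultimately show ?thesis by (metis linorder_neqE_nat)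
qed

text \<open>\<open>H x\<close> is the total multiplicity of the first \<open>x\<close> values, read cyclically modulo
  \<open>n + 1\<close>, minus \<open>x\<close>; the parking condition says that this excess does not become negative.\<close>
lemma parking_content_rotation_iff:
  fixes c :: "nat \<Rightarrow> nat" and n a :: nat
  defines "H \<equiv> \<lambda>x. int (\<Sum>u<x. c (u mod Suc n + 1)) - int x"
  shows "parking_content n (c \<circ> (cyclic_shift (Suc n) ^^ a)) \<longleftrightarrow> (\<forall>i\<in>{1..n}. H a \<le> H (a + i))"
proof -
  have sum_split: "(\<Sum>u<a + i. c (u mod Suc n + 1))
      = (\<Sum>u<a. c (u mod Suc n + 1)) + (\<Sum>j<i. c ((a + j) mod Suc n + 1))" for i
    by (induction i) simp_all
  have "(\<Sum>j<i. (c \<circ> (cyclic_shift (Suc n) ^^ a)) (Suc j)) = (\<Sum>j<i. c ((a + j) mod Suc n + 1))"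
    if "i \<le> n" for i
    using that by (intro sum.cong) (auto simp: funpow_cyclic_shift add.commute)
  moreover have "i \<le> (\<Sum>j<i. c ((a + j) mod Suc n + 1)) \<longleftrightarrow> H a \<le> H (a + i)" for i
    unfolding H_def sum_split by (simp del: of_nat_sum)
  ultimately show ?thesis
    unfolding parking_content_def by auto
qed

lemma ex1_parking_rotation:
  assumes "g \<in> Ftilde n"
  shows "\<exists>!a. a \<le> n \<and> parking_content n (word_content n g \<circ> (cyclic_shift (Suc n) ^^ a))"
proof -
  let ?f = "\<lambda>u. word_content n g (u mod Suc n + 1)"
  have "(\<Sum>u<x + Suc n. ?f u) = (\<Sum>u<x. ?f u) + n" for x
  proof (induction x)
    case 0
    then show ?case using sum_word_content[OF assms] by simp
  next
    case (Suc x)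
    have "(x + Suc n) mod Suc n = x mod Suc n" by (rule mod_add_self2)
    then have "?f (x + Suc n) = ?f x" by (simp only:)
    then show ?case using Suc by simp
  qed
  then show ?thesis
    unfolding parking_content_rotation_iff by (intro cycle_lemma) simp
qed

definition content_species :: "nat \<Rightarrow> (nat \<Rightarrow> nat) \<Rightarrow> nat list" where
  "content_species n c = map (\<lambda>i. card {v\<in>{1..n+1}. c v = i}) [0..<n+1]"

lemma species_eq_content_species: "species n g = content_species n (word_content n g)"
  unfolding species_def content_species_def mu_def word_content_def ..

lemma content_species_permute:
  assumes "\<sigma> permutes {1..Suc n}"
  shows "content_species n (c \<circ> \<sigma>) = content_species n c"
proof -
  have "card {v\<in>{1..Suc n}. c (\<sigma> v) = i} = card {v\<in>{1..Suc n}. c v = i}" for i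
  proof -
    have "\<sigma> ` {v\<in>{1..Suc n}. c (\<sigma> v) = i} = {v\<in>{1..Suc n}. c v = i}"
    proof (intro equalityI subsetI)
      fix w assume w: "w \<in> {v\<in>{1..Suc n}. c v = i}"
      then have "inv \<sigma> w \<in> {1..Suc n}"
        using permutes_in_image[OF permutes_inv[OF assms]] by blast
      then have "inv \<sigma> w \<in> {v\<in>{1..Suc n}. c (\<sigma> v) = i}"
        using w by (simp add: permutes_inverses(1)[OF assms])
      then show "w \<in> \<sigma> ` {v\<in>{1..Suc n}. c (\<sigma> v) = i}"
        using permutes_inverses(1)[OF assms] by (metis image_eqI)
    next
      fix w assume "w \<in> \<sigma> ` {v\<in>{1..Suc n}. c (\<sigma> v) = i}"
      then obtain v where "v \<in> {1..Suc n}" "c (\<sigma> v) = i" "w = \<sigma> v" by blast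
      then show "w \<in> {v\<in>{1..Suc n}. c v = i}"
        using permutes_in_image[OF assms, of v] by simp
    qed
    moreover have "inj_on \<sigma> {v\<in>{1..Suc n}. c (\<sigma> v) = i}"
      using permutes_inj[OF assms] by (rule inj_on_subset) simp
    then have "card (\<sigma> ` {v\<in>{1..Suc n}. c (\<sigma> v) = i}) = card {v\<in>{1..Suc n}. c (\<sigma> v) = i}"
      by (rule card_image)
    ultimately show ?thesis by simp
  qed
  then show ?thesis by (simp add: content_species_def)
qed

lemma finite_Ftilde: "finite (Ftilde n)"
  unfolding Ftilde_def by (rule finite_PiE) auto

lemma PF_nonempty: "PF n \<noteq> {}"
proof -
  let ?g = "\<lambda>t. if t \<in> {1..n} then 1 else undefined"
  have "{t\<in>{1..n}. ?g t \<le> i} = {1..n}" if "i \<in> {1..n}" for i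
    using that by auto
  then have "\<forall>i\<in>{1..n}. i \<le> card {t\<in>{1..n}. ?g t \<le> i}" by simp
  moreover have "?g \<in> {1..n} \<rightarrow>\<^sub>E {1..n}" by auto
  ultimately have "?g \<in> PF n" unfolding PF_def by blast
  then show ?thesis by blast
qed

lemma sum_comp_bij:
  assumes "finite C" "bij \<rho>" "(\<lambda>c. c \<circ> \<rho>) ` C \<subseteq> C"
  shows "(\<Sum>c\<in>C. h (c \<circ> \<rho>)) = (\<Sum>c\<in>C. h c)"
proof -
  have "inj_on (\<lambda>c. c \<circ> \<rho>) C"
    using assms(2) by (intro inj_onI) (metis bij_is_surj surj_iff comp_assoc comp_id)
  then have "(\<lambda>c. c \<circ> \<rho>) ` C = C" using endo_inj_surj assms(1,3) by blast
  then show ?thesis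
    using sum.reindex[OF \<open>inj_on (\<lambda>c. c \<circ> \<rho>) C\<close>, of h] by simp
qed

lemma sum_if_ex1:
  assumes "finite A" "\<exists>!a. a \<in> A \<and> P a"
  shows "(\<Sum>a\<in>A. if P a then x else 0) = x"
proof -
  obtain a where "{a\<in>A. P a} = {a}" using assms(2) by blast
  then show ?thesis using sum.inter_filter[OF assms(1), of "\<lambda>_. x" P] by simp
qed

lemma card_eq_sum_class_count:
  "card {g\<in>Ftilde n. P (word_content n g) (inversions n g)}
     = (\<Sum>c\<in>word_content n ` Ftilde n. class_count n (P c) c)"
proof -
  let ?S = "{g\<in>Ftilde n. P (word_content n g) (inversions n g)}"
  have "card ?S = (\<Sum>c\<in>word_content n ` Ftilde n. \<Sum>g\<in>{g\<in>?S. word_content n g = c}. 1)"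
    using finite_Ftilde by (subst sum.group) auto
  also have "\<dots> = (\<Sum>c\<in>word_content n ` Ftilde n. class_count n (P c) c)"
    unfolding class_count_def by (intro sum.cong) (auto intro: arg_cong[where f = card])
  finally show ?thesis .
qed

lemma word_content_funpow_cyclic_shift:
  assumes "c \<in> word_content n ` Ftilde n"
  shows "c \<circ> (cyclic_shift (Suc n) ^^ a) \<in> word_content n ` Ftilde n"
proof -
  have "0 < class_count n (\<lambda>_. True) c"
    using assms finite_Ftilde by (auto simp: class_count_def card_gt_0_iff)
  then have "0 < class_count n (\<lambda>_. True) (c \<circ> (cyclic_shift (Suc n) ^^ a))"
    by (simp only: class_count_funpow_cyclic_shift)
  then obtain g where "g \<in> Ftilde n" "word_content n g = c \<circ> (cyclic_shift (Suc n) ^^ a)"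
    unfolding class_count_def by (metis (mono_tags, lifting) card.empty empty_Collect_eq less_irrefl)
  then show ?thesis by (metis image_eqI)
qed

lemma card_Ftilde_eq_card_PF:
  "card {g\<in>Ftilde n. R (species n g) (inversions n g)}
     = Suc n * card {g\<in>PF n. R (species n g) (inversions n g)}"
proof -
  let ?C = "word_content n ` Ftilde n" and ?\<rho> = "cyclic_shift (Suc n)"
  define f where "f c = class_count n (R (content_species n c)) c" for c
  have f_rotate: "f (c \<circ> (?\<rho> ^^ a)) = f c" for c a
    unfolding f_def class_count_funpow_cyclic_shift
    using content_species_permute[OF permutes_funpow[OF cyclic_shift_permutes]] by simp
  have sum_rotate: "(\<Sum>c\<in>?C. h (c \<circ> (?\<rho> ^^ a))) = (\<Sum>c\<in>?C. h c)" for h :: "_ \<Rightarrow> nat" and a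
    using finite_Ftilde word_content_funpow_cyclic_shift
      permutes_bij[OF permutes_funpow[OF cyclic_shift_permutes]]
    by (intro sum_comp_bij) auto
  have "card {g\<in>Ftilde n. R (species n g) (inversions n g)} = (\<Sum>c\<in>?C. f c)"
    unfolding species_eq_content_species f_def by (rule card_eq_sum_class_count)
  also have "\<dots> = (\<Sum>c\<in>?C. \<Sum>a\<le>n. if parking_content n (c \<circ> (?\<rho> ^^ a)) then f c else 0)"
  proof (rule sum.cong[OF refl])
    fix c assume "c \<in> ?C"
    then obtain g where "g \<in> Ftilde n" "c = word_content n g" by blast
    then have "\<exists>!a. a \<in> {..n} \<and> parking_content n (c \<circ> (?\<rho> ^^ a))"
      using ex1_parking_rotation by simp
    then show "f c = (\<Sum>a\<le>n. if parking_content n (c \<circ> (?\<rho> ^^ a)) then f c else 0)"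
      by (intro sum_if_ex1[symmetric]) auto
  qed
  also have "\<dots> = (\<Sum>a\<le>n. \<Sum>c\<in>?C. if parking_content n (c \<circ> (?\<rho> ^^ a)) then f (c \<circ> (?\<rho> ^^ a)) else 0)"
    by (subst sum.swap) (simp only: f_rotate)
  also have "\<dots> = Suc n * (\<Sum>c\<in>?C. if parking_content n c then f c else 0)"
    using sum_rotate[of "\<lambda>c. if parking_content n c then f c else 0"] by simp
  also have "(\<Sum>c\<in>?C. if parking_content n c then f c else 0)
      = (\<Sum>c\<in>?C. class_count n (\<lambda>k. parking_content n c \<and> R (content_species n c) k) c)"
    by (intro sum.cong) (simp_all add: f_def class_count_def)
  also have "\<dots> = card {g\<in>PF n. R (species n g) (inversions n g)}"
    unfolding card_eq_sum_class_count[symmetric] PF_eq species_eq_content_species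
    by (rule arg_cong[where f = card]) auto
  finally show ?thesis .
qed

lemma map_pmf_of_set_eqI:
  assumes "finite A" "A \<noteq> {}" "finite B" "B \<noteq> {}"
    and "card B = k * card A" "\<And>y. card {x\<in>B. h x = y} = k * card {x\<in>A. h x = y}"
  shows "map_pmf h (pmf_of_set A) = map_pmf h (pmf_of_set B)"
proof (rule pmf_eqI)
  fix y
  have "0 < card B" using assms(3,4) by (simp add: card_gt_0_iff)
  then have "0 < k" using assms(5) by (simp add: nat_0_less_mult_iff)
  have "pmf (map_pmf h (pmf_of_set A)) y = card {x\<in>A. h x = y} / card A"
    using assms(1,2) by (simp add: pmf_map measure_pmf_of_set Int_def vimage_def)
  also have "\<dots> = card {x\<in>B. h x = y} / card B"
    using \<open>0 < k\<close> assms(5,6) by simp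
  also have "\<dots> = pmf (map_pmf h (pmf_of_set B)) y"
    using assms(3,4) by (simp add: pmf_map measure_pmf_of_set Int_def vimage_def)
  finally show "pmf (map_pmf h (pmf_of_set A)) y = pmf (map_pmf h (pmf_of_set B)) y" .
qed

theorem mainTheorem16:
  fixes n :: nat
  shows "map_pmf (species n) (pmf_of_set (PF n)) = map_pmf (species n) (pmf_of_set (Ftilde n))
     \<and> map_pmf (inversions n) (pmf_of_set (PF n)) = map_pmf (inversions n) (pmf_of_set (Ftilde n))"
proof -
  let ?h = "\<lambda>g. (species n g, inversions n g)"
  have "map_pmf ?h (pmf_of_set (PF n)) = map_pmf ?h (pmf_of_set (Ftilde n))"
  proof (rule map_pmf_of_set_eqI)
    show "finite (PF n)" using finite_Ftilde by (simp add: PF_eq)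
    show "Ftilde n \<noteq> {}" using PF_nonempty by (auto simp: PF_eq)
    show "card (Ftilde n) = Suc n * card (PF n)"
      using card_Ftilde_eq_card_PF[where R = "\<lambda>_ _. True"] by simp
    show "card {g\<in>Ftilde n. ?h g = y} = Suc n * card {g\<in>PF n. ?h g = y}" for y
      using card_Ftilde_eq_card_PF[where R = "\<lambda>s k. (s, k) = y"] by simp
  qed (use PF_nonempty finite_Ftilde in auto)
  then have "map_pmf f (map_pmf ?h (pmf_of_set (PF n))) = map_pmf f (map_pmf ?h (pmf_of_set (Ftilde n)))"
    for f :: "nat list \<times> nat \<Rightarrow> 'b"
    by (rule arg_cong)
  from this[of fst] this[of snd] show ?thesis by (simp add: map_pmf_comp)
qed

end
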